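(* Let $(\mathfrak{g},\omega)$ be a $2n$-dimensional real irreducible symplectic Lie algebra. For $\alpha\in\mathfrak{g}^*$ let $\omega_\alpha=\omega+d\alpha$. If $\omega_\alpha$ is non-degenerate, then $(\mathfrak{g},\omega_\alpha)$ is a $2n$-dimensional irreducible symplectic Lie algebra.
   Context: A symplectic Lie algebra is a real Lie algebra with a non-degenerate 2-form $\omega$ satisfying $\omega([x,y],z)+\omega([y,z],x)+\omega([z,x],y)=0$; it is irreducible if it has no nonzero ideal $\mathfrak{j}$ with $\omega(\mathfrak{j},\mathfrak{j})=0$. $d\alpha(x,y)=-\alpha([x,y])$. *)

theory Defs
  imports "HOL-Analysis.Analysis"
begin

text \<open>A finite-dimensional real Lie algebra: the underlying space is a
finite-dimensional real vector space (type of class euclidean_space; the inner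
product is irrelevant), with a bilinear alternating bracket satisfying Jacobi.\<close>

definition lie_algebra :: "('v::euclidean_space \<Rightarrow> 'v \<Rightarrow> 'v) \<Rightarrow> bool" where
  "lie_algebra br \<longleftrightarrow> bilinear br \<and> (\<forall>x. br x x = 0) \<and>
     (\<forall>x y z. br x (br y z) + br y (br z x) + br z (br x y) = 0)"

definition nondegenerate_form :: "('v::real_vector \<Rightarrow> 'v \<Rightarrow> real) \<Rightarrow> bool" where
  "nondegenerate_form \<omega> \<longleftrightarrow> (\<forall>x. (\<forall>y. \<omega> x y = 0) \<longrightarrow> x = 0)"

definition symplectic_lie_algebra :: "('v::euclidean_space \<Rightarrow> 'v \<Rightarrow> 'v) \<Rightarrow> ('v \<Rightarrow> 'v \<Rightarrow> real) \<Rightarrow> bool" where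
  "symplectic_lie_algebra br \<omega> \<longleftrightarrow> lie_algebra br \<and> bilinear \<omega> \<and> (\<forall>x. \<omega> x x = 0) \<and>
     nondegenerate_form \<omega> \<and>
     (\<forall>x y z. \<omega> (br x y) z + \<omega> (br y z) x + \<omega> (br z x) y = 0)"

definition lie_ideal :: "('v::euclidean_space \<Rightarrow> 'v \<Rightarrow> 'v) \<Rightarrow> 'v set \<Rightarrow> bool" where
  "lie_ideal br J \<longleftrightarrow> subspace J \<and> (\<forall>x y. y \<in> J \<longrightarrow> br x y \<in> J)"

definition irreducible_symplectic_lie_algebra ::
  "('v::euclidean_space \<Rightarrow> 'v \<Rightarrow> 'v) \<Rightarrow> ('v \<Rightarrow> 'v \<Rightarrow> real) \<Rightarrow> bool" where
  "irreducible_symplectic_lie_algebra br \<omega> \<longleftrightarrow> symplectic_lie_algebra br \<omega> \<and>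
     \<not> (\<exists>J. lie_ideal br J \<and> J \<noteq> {0} \<and> (\<forall>x\<in>J. \<forall>y\<in>J. \<omega> x y = 0))"

definition lie_d :: "('v \<Rightarrow> 'v \<Rightarrow> 'v) \<Rightarrow> ('v \<Rightarrow> real) \<Rightarrow> 'v \<Rightarrow> 'v \<Rightarrow> real" where
  "lie_d br \<alpha> x y = - \<alpha> (br x y)"

definition omega_alpha :: "('v \<Rightarrow> 'v \<Rightarrow> 'v) \<Rightarrow> ('v \<Rightarrow> 'v \<Rightarrow> real) \<Rightarrow> ('v \<Rightarrow> real) \<Rightarrow> 'v \<Rightarrow> 'v \<Rightarrow> real" where
  "omega_alpha br \<omega> \<alpha> x y = \<omega> x y + lie_d br \<alpha> x y"

end

theory Submission
  imports Defs
begin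

text \<open>The form \<omega> + d\<alpha> is again bilinear, alternating and a cocycle, since d\<alpha> is all three
  (its cocycle identity is \<alpha> applied to the Jacobi identity). For irreducibility, the cocycle
  identity together with non-degeneracy forces every isotropic ideal to be abelian; on an
  abelian ideal d\<alpha> vanishes, so an ideal isotropic for \<omega> + d\<alpha> is isotropic for \<omega>.\<close>

lemma lie_algebra_bracket_antisym:
  assumes "lie_algebra br"
  shows "br y x = - br x y"
proof -
  have bl: "bilinear br" and alt: "\<And>x. br x x = 0"
    using assms unfolding lie_algebra_def by auto
  have "br (x + y) (x + y) = br x x + br x y + br y x + br y y"
    using bl by (simp add: bilinear_ladd bilinear_radd)
  then show ?thesis
    using alt by (simp add: eq_neg_iff_add_eq_0 add.commute)
qed

lemma lie_algebra_jacobi_left: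
  assumes "lie_algebra br"
  shows "br (br x y) z + br (br y z) x + br (br z x) y = 0"
proof -
  have "br (br x y) z + br (br y z) x + br (br z x) y
      = - (br x (br y z) + br y (br z x) + br z (br x y))"
    using lie_algebra_bracket_antisym[OF assms, of "br x y" z]
      lie_algebra_bracket_antisym[OF assms, of "br y z" x]
      lie_algebra_bracket_antisym[OF assms, of "br z x" y]
    by (simp add: algebra_simps)
  also have "\<dots> = 0"
    using assms unfolding lie_algebra_def by simp
  finally show ?thesis .
qed

lemma bilinear_lie_d:
  assumes "bilinear br" and "linear \<alpha>"
  shows "bilinear (lie_d br \<alpha>)"
proof -
  have "linear (\<lambda>y. \<alpha> (br x y))" "linear (\<lambda>x. \<alpha> (br x y))" for x y
    using linear_compose[OF _ assms(2)] assms(1)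
    unfolding bilinear_def o_def by auto
  then show ?thesis
    unfolding bilinear_def lie_d_def by (auto intro: linear_compose_neg)
qed

lemma lie_d_cocycle:
  assumes "lie_algebra br" and "linear \<alpha>"
  shows "lie_d br \<alpha> (br x y) z + lie_d br \<alpha> (br y z) x + lie_d br \<alpha> (br z x) y = 0"
proof -
  have "\<alpha> (br (br x y) z + br (br y z) x + br (br z x) y) = 0"
    using lie_algebra_jacobi_left[OF assms(1)] linear_0[OF assms(2)] by simp
  then show ?thesis
    unfolding lie_d_def using linear_add[OF assms(2)] by (simp add: algebra_simps)
qed

lemma symplectic_lie_algebra_omega_alpha:
  assumes "symplectic_lie_algebra br \<omega>" and "linear \<alpha>"
    and "nondegenerate_form (omega_alpha br \<omega> \<alpha>)"
  shows "symplectic_lie_algebra br (omega_alpha br \<omega> \<alpha>)"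
proof -
  have L: "lie_algebra br" and B: "bilinear \<omega>"
    using assms(1) unfolding symplectic_lie_algebra_def by auto
  have sum_eq: "omega_alpha br \<omega> \<alpha> = (\<lambda>x y. \<omega> x y + lie_d br \<alpha> x y)"
    by (simp add: omega_alpha_def fun_eq_iff)
  have "bilinear (lie_d br \<alpha>)"
    using bilinear_lie_d L assms(2) unfolding lie_algebra_def by blast
  then have "bilinear (omega_alpha br \<omega> \<alpha>)"
    using B unfolding sum_eq bilinear_def by (auto intro: linear_compose_add)
  moreover have "lie_d br \<alpha> x x = 0" for x
    using L linear_0[OF assms(2)] unfolding lie_algebra_def lie_d_def by simp
  ultimately show ?thesis
    using assms lie_d_cocycle[OF L assms(2)]
    unfolding symplectic_lie_algebra_def omega_alpha_def by (simp add: algebra_simps)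
qed

lemma lie_ideal_bracket_left:
  assumes "lie_algebra br" and "lie_ideal br J" and "x \<in> J"
  shows "br x y \<in> J"
proof -
  have "- br y x \<in> J"
    using assms(2,3) unfolding lie_ideal_def by (auto intro: subspace_neg)
  then show ?thesis
    using lie_algebra_bracket_antisym[OF assms(1)] by metis
qed

lemma isotropic_ideal_abelian:
  assumes S: "symplectic_lie_algebra br \<omega>" and J: "lie_ideal br J"
    and iso: "\<forall>x\<in>J. \<forall>y\<in>J. \<omega> x y = 0"
    and "x \<in> J" and "y \<in> J"
  shows "br x y = 0"
proof -
  have L: "lie_algebra br"
    using S unfolding symplectic_lie_algebra_def by simp
  have "\<omega> (br x y) z = 0" for z
  proof -
    have "\<omega> (br y z) x = 0" and "\<omega> (br z x) y = 0"
      using iso assms(4,5) lie_ideal_bracket_left[OF L J] J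
      unfolding lie_ideal_def by auto
    then show ?thesis
      using S unfolding symplectic_lie_algebra_def by (metis add_cancel_left_left add.right_neutral)
  qed
  then show ?thesis
    using S unfolding symplectic_lie_algebra_def nondegenerate_form_def by blast
qed

theorem lemma2p6:
  fixes br :: "'v::euclidean_space \<Rightarrow> 'v \<Rightarrow> 'v"
    and \<omega> :: "'v \<Rightarrow> 'v \<Rightarrow> real"
    and \<alpha> :: "'v \<Rightarrow> real"
    and n :: nat
  assumes "DIM('v) = 2 * n"
    and "irreducible_symplectic_lie_algebra br \<omega>"
    and "linear \<alpha>"
    and "nondegenerate_form (omega_alpha br \<omega> \<alpha>)"
  shows "DIM('v) = 2 * n \<and> irreducible_symplectic_lie_algebra br (omega_alpha br \<omega> \<alpha>)"
proof -
  have S: "symplectic_lie_algebra br \<omega>"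
    using assms(2) unfolding irreducible_symplectic_lie_algebra_def by simp
  have S\<alpha>: "symplectic_lie_algebra br (omega_alpha br \<omega> \<alpha>)"
    using symplectic_lie_algebra_omega_alpha[OF S assms(3,4)] .
  have "\<forall>x\<in>J. \<forall>y\<in>J. \<omega> x y = 0"
    if J: "lie_ideal br J" and iso: "\<forall>x\<in>J. \<forall>y\<in>J. omega_alpha br \<omega> \<alpha> x y = 0" for J
  proof (intro ballI)
    fix x y assume "x \<in> J" "y \<in> J"
    then have "br x y = 0"
      using isotropic_ideal_abelian[OF S\<alpha> J iso] by blast
    then show "\<omega> x y = 0"
      using iso \<open>x \<in> J\<close> \<open>y \<in> J\<close> linear_0[OF assms(3)]
      by (simp add: omega_alpha_def lie_d_def)
  qed
  then show ?thesis
    using assms(1,2) S\<alpha> unfolding irreducible_symplectic_lie_algebra_def by blast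
qed

end
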